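(* View a section $P\in\Gamma(D^*\otimes D^* )$ as the $\mathcal A$-valued 1-form $X\mapsto P(X_D,\cdot)\in D^*$ and let $\Box=\partial\partial^*+\partial^*\partial$. Then on symmetric bilinear forms on $D$: if $P$ is symmetric, trace-free and $\sum_{s=1}^3P(I_s\cdot,I_s\cdot)=-P$, then $\Box P=4(n+2)P$; if $P$ is symmetric, trace-free and $\sum_{s=1}^3P(I_s\cdot,I_s\cdot)=3P$, then $\Box P=4(n+4)P$; and $\Box g=8(n+2)g$.
   Context: Setup. $M$ has dimension $4n+3$ with qc structure $(D,Q,[g])$: $D\subset TM$ of rank $4n$, $Q$ locally spanned by almost complex structures $I_1,I_2,I_3$ on $D$ with $I_1I_2=-I_2I_1=I_3$, $g$ a fixed metric in the conformal class on $D$, locally $D=\ker\eta^1\cap\ker\eta^2\cap\ker\eta^3$ with $d\eta^a(u,v)=2g(I_au,v)$ on $D$, and Reeb fields $\xi_a$ with $\eta^b(\xi_a)=\delta^b_a$, $(\xi_a\lrcorner d\eta^b)|_D=-(\xi_b\lrcorner d\eta^a)|_D$; $V=\mathrm{span}(\xi_a)$, $TM=V\oplus D$; $\eta^1,\eta^2,\eta^3$ also denote the dual basis of $V^*$. $(r,s,t)$ is a cyclic permutation of $(1,2,3)$; $I_0=\mathrm{Id}_D$. $\mathfrak{sp}(D,g)$ = $g$-skew endomorphisms commuting with all $I_s$; $\mathrm{End}_0(D)=\{q_0\mathrm{Id}+\sum_sq_sI_s+A_0:A_0\in\mathfrak{sp}(D,g)\}$. Algebraic bracket. Let $\mathcal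 A=V\oplus D\oplus\mathrm{End}_0(D)\oplus D^*\oplus V^*$, graded in degrees $-2,-1,0,1,2$. The bracket $\{\cdot,\cdot\}$ on $\mathcal A$ is fiberwise, bilinear, skew-symmetric, additive in degrees, zero whenever the total degree lies outside $[-2,2]$, and given for $u,v\in D$, $\varphi,\psi\in D^*$, $\Phi=\sum_{s=0}^3q_sI_s+\Phi_0$ ($\Phi_0\in\mathfrak{sp}(D,g)$), $\Psi\in\mathrm{End}_0(D)$, $\xi=\sum a_s\xi_s\in V$, $\eta=\sum b_s\eta^s\in V^*$, by: $\{u,v\}=-2\sum_sg(I_su,v)\xi_s$; $\{\Phi,u\}=\Phi(u)$; $\{\Phi,\Psi\}=\Phi\Psi-\Psi\Phi$; $\{\Phi,\xi\}=2q_0\xi+2\sum_{(r,s,t)}(q_ra_s-q_sa_r)\xi_t$; $\{\Phi,\varphi\}=-\varphi\circ\Phi$; $\{\Phi_0,\eta\}=0$, $\{I_0,\eta\}=-2\eta$, $\{I_r,\eta^s\}=-\{I_s,\eta^r\}=2\eta^t$, $\{I_r,\eta^r\}=0$; $\{u,\varphi\}=\varphi(u)I_0-\sum_{s=1}^3\varphi(I_su)I_s+u\wedge_{I_0}\varphi-\sum_{s=1}^3u\wedge_{I_s}\varphi$ with $(u\wedge_{I_s}\varphi)(v)=\varphi(I_sv)I_su-g(u,I_sv)I_s\varphi^\sharp$; $\{\xi,\eta\}=2\sum_sa_sb_sI_0-2\sum_{(r,s,t)}(a_rb_s-a_sb_r)I_t$; $\{\xi,\varphi\}=\sum_sa_sI_s(\varphi^\sharp)$;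 $\{\varphi,\psi\}=-\sum_s\varphi(I_s\psi^\sharp)\eta^s$; $\{v,\eta\}=2\sum_sb_sg(I_sv,\cdot)$. (Sums over $(r,s,t)$ are over cyclic permutations; $\varphi^\sharp$ is the $g$-dual vector.) Differential and codifferential. Let $(\epsilon_i)=(\xi_1,\xi_2,\xi_3,e_1,\dots,e_{4n})$ with $(e_a)$ a $g$-orthonormal frame of $D$, and $(\epsilon^i)=(\eta^1,\eta^2,\eta^3,e^1,\dots,e^{4n})$ its dual frame (identifying $TM\cong V\oplus D$ and $T^*M\cong V^*\oplus D^*$). For a section $s$ of $\mathcal A$: $(\partial s)(X)=\{X,s\}$. For an $\mathcal A$-valued 1-form $\phi$: $\partial^*\phi=\sum_i\{\epsilon^i,\phi(\epsilon_i)\}$ and $(\partial\phi)(X,Y)=\{X,\phi(Y)\}-\{Y,\phi(X)\}-\phi(\{X,Y\}_-)$. For an $\mathcal A$-valued 2-form $K$: $(\partial^*K)(X)=\sum_i\{\epsilon^i,K(\epsilon_i,X)\}+\frac12\sum_iK(\{\epsilon^i,X\}_-,\epsilon_i)$. Here $(\cdot)_-$ denotes the $V\oplus D$ component, and $X,Y\in TM\cong V\oplus D$. *)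

theory Defs
  imports "HOL-Analysis.Analysis"
begin

text \<open>The fibre of D is a Euclidean space 'd with inner product g,
  V and V* are real^qi (coefficients w.r.t. xi_1,xi_2,xi_3 resp. eta^1,eta^2,eta^3),
  End(D) is 'd \<Rightarrow>L 'd and D* is 'd \<Rightarrow>L real.\<close>

datatype qi = Q1 | Q2 | Q3

instance qi :: finite
proof
  have "(UNIV :: qi set) = {Q1, Q2, Q3}" by (auto intro: qi.exhaust)
  then show "finite (UNIV :: qi set)" by (metis finite.emptyI finite_insert)
qed

text \<open>cyclic successor: (r, nx r, nx (nx r)) runs over the cyclic permutations of (1,2,3)\<close>
fun nx :: "qi \<Rightarrow> qi" where
  "nx Q1 = Q2" | "nx Q2 = Q3" | "nx Q3 = Q1"

type_synonym 'd alg = "(real^qi) \<times> 'd \<times> ('d \<Rightarrow>\<^sub>L 'd) \<times> ('d \<Rightarrow>\<^sub>L real) \<times> (real^qi)"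
type_synonym 'd tm = "(real^qi) \<times> 'd"

definition aV :: "'d alg \<Rightarrow> real^qi" where "aV x = fst x"
definition aD :: "'d alg \<Rightarrow> 'd" where "aD x = fst (snd x)"
definition aE :: "'d alg \<Rightarrow> ('d \<Rightarrow>\<^sub>L 'd)" where "aE x = fst (snd (snd x))"
definition aDs :: "'d alg \<Rightarrow> ('d \<Rightarrow>\<^sub>L real)" where "aDs x = fst (snd (snd (snd x)))"
definition aVs :: "'d alg \<Rightarrow> real^qi" where "aVs x = snd (snd (snd (snd x)))"

definition sharp :: "('d::euclidean_space \<Rightarrow>\<^sub>L real) \<Rightarrow> 'd" where
  "sharp \<phi> = (\<Sum>b\<in>Basis. blinfun_apply \<phi> b *\<^sub>R b)"

definition spD :: "(qi \<Rightarrow> ('d::euclidean_space \<Rightarrow>\<^sub>L 'd)) \<Rightarrow> ('d \<Rightarrow>\<^sub>L 'd) set" where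
  "spD I = {A. (\<forall>u v. blinfun_apply A u \<bullet> v = - (u \<bullet> blinfun_apply A v))
               \<and> (\<forall>s. A o\<^sub>L I s = I s o\<^sub>L A)}"

definition qdec :: "(qi \<Rightarrow> ('d::euclidean_space \<Rightarrow>\<^sub>L 'd)) \<Rightarrow> ('d \<Rightarrow>\<^sub>L 'd)
    \<Rightarrow> real \<times> (qi \<Rightarrow> real) \<times> ('d \<Rightarrow>\<^sub>L 'd)" where
  "qdec I \<Phi> = (THE (q0, q, \<Phi>0). \<Phi>0 \<in> spD I \<and>
       \<Phi> = q0 *\<^sub>R id_blinfun + (\<Sum>s\<in>UNIV. q s *\<^sub>R I s) + \<Phi>0)"

definition xiv :: "qi \<Rightarrow> real^qi" where "xiv s = axis s 1"

definition brDD :: "(qi \<Rightarrow> ('d::euclidean_space \<Rightarrow>\<^sub>L 'd)) \<Rightarrow> 'd \<Rightarrow> 'd \<Rightarrow> real^qi" where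
  "brDD I u v = (\<Sum>s\<in>UNIV. (-2 * (blinfun_apply (I s) u \<bullet> v)) *\<^sub>R xiv s)"

definition brEV :: "(qi \<Rightarrow> ('d::euclidean_space \<Rightarrow>\<^sub>L 'd)) \<Rightarrow> ('d \<Rightarrow>\<^sub>L 'd) \<Rightarrow> real^qi \<Rightarrow> real^qi" where
  "brEV I \<Phi> a = (case qdec I \<Phi> of (q0, q, _) \<Rightarrow>
      (2 * q0) *\<^sub>R a
      + (\<Sum>r\<in>UNIV. (2 * (q r * a $ nx r - q (nx r) * a $ r)) *\<^sub>R xiv (nx (nx r))))"

definition brEVs :: "(qi \<Rightarrow> ('d::euclidean_space \<Rightarrow>\<^sub>L 'd)) \<Rightarrow> ('d \<Rightarrow>\<^sub>L 'd) \<Rightarrow> real^qi \<Rightarrow> real^qi" where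
  "brEVs I \<Phi> b = (case qdec I \<Phi> of (q0, q, _) \<Rightarrow>
      (-2 * q0) *\<^sub>R b
      + (\<Sum>r\<in>UNIV. (2 * (q r * b $ nx r - q (nx r) * b $ r)) *\<^sub>R xiv (nx (nx r))))"

definition wedgeJ :: "('d::euclidean_space \<Rightarrow>\<^sub>L 'd) \<Rightarrow> 'd \<Rightarrow> ('d \<Rightarrow>\<^sub>L real) \<Rightarrow> ('d \<Rightarrow>\<^sub>L 'd)" where
  "wedgeJ J u \<phi> = Blinfun (\<lambda>v. blinfun_apply \<phi> (blinfun_apply J v) *\<^sub>R blinfun_apply J u
        - (u \<bullet> blinfun_apply J v) *\<^sub>R blinfun_apply J (sharp \<phi>))"

definition brDDs :: "(qi \<Rightarrow> ('d::euclidean_space \<Rightarrow>\<^sub>L 'd)) \<Rightarrow> 'd \<Rightarrow> ('d \<Rightarrow>\<^sub>L real) \<Rightarrow> ('d \<Rightarrow>\<^sub>L 'd)" where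
  "brDDs I u \<phi> = blinfun_apply \<phi> u *\<^sub>R id_blinfun
      - (\<Sum>s\<in>UNIV. blinfun_apply \<phi> (blinfun_apply (I s) u) *\<^sub>R I s)
      + wedgeJ id_blinfun u \<phi> - (\<Sum>s\<in>UNIV. wedgeJ (I s) u \<phi>)"

definition brVVs :: "(qi \<Rightarrow> ('d::euclidean_space \<Rightarrow>\<^sub>L 'd)) \<Rightarrow> real^qi \<Rightarrow> real^qi \<Rightarrow> ('d \<Rightarrow>\<^sub>L 'd)" where
  "brVVs I a b = (2 * (\<Sum>s\<in>UNIV. a $ s * b $ s)) *\<^sub>R id_blinfun
      - (\<Sum>r\<in>UNIV. (2 * (a $ r * b $ nx r - a $ nx r * b $ r)) *\<^sub>R I (nx (nx r)))"

definition brVDs :: "(qi \<Rightarrow> ('d::euclidean_space \<Rightarrow>\<^sub>L 'd)) \<Rightarrow> real^qi \<Rightarrow> ('d \<Rightarrow>\<^sub>L real) \<Rightarrow> 'd" where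
  "brVDs I a \<phi> = (\<Sum>s\<in>UNIV. a $ s *\<^sub>R blinfun_apply (I s) (sharp \<phi>))"

definition brDsDs :: "(qi \<Rightarrow> ('d::euclidean_space \<Rightarrow>\<^sub>L 'd)) \<Rightarrow> ('d \<Rightarrow>\<^sub>L real) \<Rightarrow> ('d \<Rightarrow>\<^sub>L real) \<Rightarrow> real^qi" where
  "brDsDs I \<phi> \<psi> = (\<Sum>s\<in>UNIV. (- blinfun_apply \<phi> (blinfun_apply (I s) (sharp \<psi>))) *\<^sub>R xiv s)"

definition brDVs :: "(qi \<Rightarrow> ('d::euclidean_space \<Rightarrow>\<^sub>L 'd)) \<Rightarrow> 'd \<Rightarrow> real^qi \<Rightarrow> ('d \<Rightarrow>\<^sub>L real)" where
  "brDVs I v b = (\<Sum>s\<in>UNIV. (2 * b $ s) *\<^sub>R Blinfun (\<lambda>w. blinfun_apply (I s) v \<bullet> w))"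

text \<open>The full bracket on A, extended by bilinearity and skew-symmetry.\<close>
definition br :: "(qi \<Rightarrow> ('d::euclidean_space \<Rightarrow>\<^sub>L 'd)) \<Rightarrow> 'd alg \<Rightarrow> 'd alg \<Rightarrow> 'd alg" where
  "br I x y =
    ( brEV I (aE x) (aV y) - brEV I (aE y) (aV x) + brDD I (aD x) (aD y),
      brVDs I (aV x) (aDs y) - brVDs I (aV y) (aDs x)
        + blinfun_apply (aE x) (aD y) - blinfun_apply (aE y) (aD x),
      brVVs I (aV x) (aVs y) - brVVs I (aV y) (aVs x)
        + brDDs I (aD x) (aDs y) - brDDs I (aD y) (aDs x)
        + ((aE x o\<^sub>L aE y) - (aE y o\<^sub>L aE x)),
      brDVs I (aD x) (aVs y) - brDVs I (aD y) (aVs x)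
        + (aDs x o\<^sub>L aE y) - (aDs y o\<^sub>L aE x),
      brEVs I (aE x) (aVs y) - brEVs I (aE y) (aVs x) + brDsDs I (aDs x) (aDs y) )"

definition iota :: "'d tm \<Rightarrow> 'd::euclidean_space alg" where
  "iota X = (fst X, snd X, 0, 0, 0)"
definition projm :: "'d alg \<Rightarrow> 'd tm" where
  "projm x = (aV x, aD x)"

definition frV :: "qi \<Rightarrow> 'd::euclidean_space tm" where "frV s = (xiv s, 0)"
definition frD :: "'d::euclidean_space \<Rightarrow> 'd tm" where "frD b = (0, b)"
definition cofrV :: "qi \<Rightarrow> 'd::euclidean_space alg" where "cofrV s = (0, 0, 0, 0, xiv s)"
definition cofrD :: "'d::euclidean_space \<Rightarrow> 'd alg" where
  "cofrD b = (0, 0, 0, Blinfun (\<lambda>w. b \<bullet> w), 0)"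

definition d0 :: "(qi \<Rightarrow> ('d::euclidean_space \<Rightarrow>\<^sub>L 'd)) \<Rightarrow> 'd alg \<Rightarrow> ('d tm \<Rightarrow> 'd alg)" where
  "d0 I s = (\<lambda>X. br I (iota X) s)"

definition dstar1 :: "(qi \<Rightarrow> ('d::euclidean_space \<Rightarrow>\<^sub>L 'd)) \<Rightarrow> ('d tm \<Rightarrow> 'd alg) \<Rightarrow> 'd alg" where
  "dstar1 I \<phi> = (\<Sum>s\<in>UNIV. br I (cofrV s) (\<phi> (frV s)))
               + (\<Sum>b\<in>Basis. br I (cofrD b) (\<phi> (frD b)))"

definition d1 :: "(qi \<Rightarrow> ('d::euclidean_space \<Rightarrow>\<^sub>L 'd)) \<Rightarrow> ('d tm \<Rightarrow> 'd alg) \<Rightarrow> ('d tm \<Rightarrow> 'd tm \<Rightarrow> 'd alg)" where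
  "d1 I \<phi> = (\<lambda>X Y. br I (iota X) (\<phi> Y) - br I (iota Y) (\<phi> X) - \<phi> (projm (br I (iota X) (iota Y))))"

definition dstar2 :: "(qi \<Rightarrow> ('d::euclidean_space \<Rightarrow>\<^sub>L 'd)) \<Rightarrow> ('d tm \<Rightarrow> 'd tm \<Rightarrow> 'd alg) \<Rightarrow> ('d tm \<Rightarrow> 'd alg)" where
  "dstar2 I K = (\<lambda>X.
      (\<Sum>s\<in>UNIV. br I (cofrV s) (K (frV s) X)) + (\<Sum>b\<in>Basis. br I (cofrD b) (K (frD b) X))
      + (1/2) *\<^sub>R ((\<Sum>s\<in>UNIV. K (projm (br I (cofrV s) (iota X))) (frV s))
                 + (\<Sum>b\<in>Basis. K (projm (br I (cofrD b) (iota X))) (frD b))))"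

definition boxop :: "(qi \<Rightarrow> ('d::euclidean_space \<Rightarrow>\<^sub>L 'd)) \<Rightarrow> ('d tm \<Rightarrow> 'd alg) \<Rightarrow> ('d tm \<Rightarrow> 'd alg)" where
  "boxop I \<phi> = (\<lambda>X. d0 I (dstar1 I \<phi>) X + dstar2 I (d1 I \<phi>) X)"

definition oneform :: "('d::euclidean_space \<Rightarrow> 'd \<Rightarrow> real) \<Rightarrow> ('d tm \<Rightarrow> 'd alg)" where
  "oneform P = (\<lambda>X. (0, 0, 0, Blinfun (\<lambda>w. P (snd X) w), 0))"

end

theory Submission
  imports Defs
begin

(* Structure of the file.
   (1) Generic linear algebra on the Euclidean fibre D: the musical maps flat/sharp and the
       expansion of linear maps in an orthonormal basis.
   (2) For the quaternionic structure I_1, I_2, I_3 (locale quat_structure) we derive the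
       quaternion relations and skewness, and show that 0 in End_0(D) has the trivial
       decomposition, so that the brackets {0, xi} and {0, eta} vanish.
   (3) P symmetric and I_s skew give tr P(., I_s .) = 0, hence d* phi_P = 0 and
       Box phi_P = d* d phi_P, for which we compute an explicit formula (box_oneform).
   (4) The End-component of that formula cancels (End_component_vanishes), while the
       D*-component is  (dim D + 10) P + 2 sum_s P(I_s ., I_s .) + g tr P
       (Dstar_component_apply).
   (5) Hence phi_P is an eigenform as soon as that expression equals c P
       (box_oneform_eigen); the three cases of the theorem are instances with dim D = 4n. *)

declare blinfun.add_left[simp] blinfun.minus_left[simp] blinfun.diff_left[simp]
  blinfun.scaleR_left[simp] blinfun.sum_left[simp]
declare blinfun.add_right[simp] blinfun.minus_right[simp] blinfun.diff_right[simp]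
  blinfun.scaleR_right[simp] blinfun.sum_right[simp]

lemma UNIV_qi: "(UNIV :: qi set) = {Q1, Q2, Q3}"
  using qi.exhaust by auto

lemma sum_qi: "sum f (UNIV :: qi set) = f Q1 + f Q2 + f Q3"
  by (simp add: UNIV_qi add.assoc)

lemma card_qi [simp]: "card (UNIV :: qi set) = 3"
  by (simp add: UNIV_qi)

lemma sum_Pair: "(\<Sum>x\<in>A. (f x, g x)) = (\<Sum>x\<in>A. f x, \<Sum>x\<in>A. g x)"
  by (simp add: prod_eq_iff fst_sum snd_sum)

lemmas alg_components = aV_def aD_def aE_def aDs_def aVs_def


section \<open>Linear algebra on the Euclidean fibre\<close>

definition flat :: "'d::euclidean_space \<Rightarrow> ('d \<Rightarrow>\<^sub>L real)" where
  "flat b = Blinfun (\<lambda>w. b \<bullet> w)"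

lemma flat_apply [simp]: "blinfun_apply (flat b) w = b \<bullet> w"
  unfolding flat_def by (simp add: bounded_linear_Blinfun_apply bounded_linear_inner_right)

lemma linear_basis_expansion:
  assumes "linear f"
  shows "(\<Sum>b\<in>Basis. (b \<bullet> x) *\<^sub>R f b) = f x"
proof -
  have "f x = f (\<Sum>b\<in>Basis. (x \<bullet> b) *\<^sub>R b)" by (simp add: euclidean_representation)
  also have "\<dots> = (\<Sum>b\<in>Basis. (x \<bullet> b) *\<^sub>R f b)"
    using assms by (simp add: linear_sum linear_scale)
  finally show ?thesis by (simp add: inner_commute)
qed

lemma linear_functional_basis_expansion:
  "linear (f :: 'd::euclidean_space \<Rightarrow> real) \<Longrightarrow> (\<Sum>b\<in>Basis. (b \<bullet> x) * f b) = f x"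
  using linear_basis_expansion[of f x] by simp

lemma inner_basis_expansion: "(\<Sum>b\<in>Basis. (b \<bullet> x) * (b \<bullet> y)) = x \<bullet> y"
  using linear_functional_basis_expansion[of "\<lambda>b. b \<bullet> y" x]
  by (simp add: linear_conv_bounded_linear bounded_linear_inner_left)

lemma sharp_inner: "sharp \<phi> \<bullet> z = blinfun_apply \<phi> z"
proof -
  have "blinfun_apply \<phi> z = blinfun_apply \<phi> (\<Sum>b\<in>Basis. (z \<bullet> b) *\<^sub>R b)"
    by (simp add: euclidean_representation)
  also have "\<dots> = (\<Sum>b\<in>Basis. (z \<bullet> b) * blinfun_apply \<phi> b)"
    by simp
  finally show ?thesis unfolding sharp_def
    by (simp add: inner_sum_right inner_sum_left mult.commute inner_commute)
qed

lemma inner_sharp: "z \<bullet> sharp \<phi> = blinfun_apply \<phi> z"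
  by (metis inner_commute sharp_inner)

lemma sharp_add [simp]: "sharp (\<phi> + \<psi>) = sharp \<phi> + sharp \<psi>"
  unfolding sharp_def by (simp add: scaleR_add_left sum.distrib)

lemma sharp_scaleR [simp]: "sharp (c *\<^sub>R \<phi>) = c *\<^sub>R sharp \<phi>"
  unfolding sharp_def by (simp add: scaleR_sum_right)

lemma sharp_zero [simp]: "sharp 0 = 0"
  unfolding sharp_def by simp

lemma sharp_minus [simp]: "sharp (- \<phi>) = - sharp \<phi>"
  using sharp_scaleR[of "-1" \<phi>] by simp

lemma sharp_diff [simp]: "sharp (\<phi> - \<psi>) = sharp \<phi> - sharp \<psi>"
  using sharp_add[of \<phi> "- \<psi>"] by simp

lemma sharp_sum [simp]: "sharp (sum f A) = (\<Sum>i\<in>A. sharp (f i))"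
  by (induction A rule: infinite_finite_induct) auto

lemma sharp_flat [simp]: "sharp (flat b) = b"
proof -
  have "(\<Sum>c\<in>Basis. (c \<bullet> b) *\<^sub>R c) = (\<Sum>c\<in>Basis. (b \<bullet> c) *\<^sub>R c)"
    by (simp add: inner_commute)
  then show ?thesis unfolding sharp_def by (simp add: euclidean_representation)
qed

lemma bilinear_linear_left: "bilinear P \<Longrightarrow> linear (\<lambda>x. P x y)"
  unfolding bilinear_def by blast

lemma bilinear_linear_right: "bilinear P \<Longrightarrow> linear (P x)"
  unfolding bilinear_def by (metis (no_types) ext)

lemma bilinear_zero [simp]: "bilinear P \<Longrightarrow> P 0 = (\<lambda>_. 0)"
  using bilinear_linear_left[of P] linear_0 by fastforce

lemma Blinfun_bilinear_apply [simp]: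
  "bilinear (P :: 'd::euclidean_space \<Rightarrow> 'd \<Rightarrow> real) \<Longrightarrow> blinfun_apply (Blinfun (P x)) = P x"
  by (rule bounded_linear_Blinfun_apply) (metis bilinear_linear_right linear_conv_bounded_linear)

lemma Blinfun_zero [simp]: "Blinfun (\<lambda>_. 0) = 0"
  by (rule blinfun_eqI) (simp add: bounded_linear_Blinfun_apply bounded_linear_zero)

lemma linear_Blinfun_bilinear:
  fixes P :: "'d::euclidean_space \<Rightarrow> 'd \<Rightarrow> real"
  assumes bl: "bilinear P"
  shows "linear (\<lambda>x. Blinfun (P x))"
proof -
  have additive: "P (x + y) w = P x w + P y w" and homogeneous: "P (c *\<^sub>R x) w = c * P x w"
    for x y c w
    using linear_add[OF bilinear_linear_left[OF bl, of w]]
      linear_scale[OF bilinear_linear_left[OF bl, of w]] by auto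
  show ?thesis by (rule linearI; rule blinfun_eqI) (simp_all add: bl additive homogeneous)
qed

lemma Blinfun_bilinear_expansion:
  fixes P :: "'d::euclidean_space \<Rightarrow> 'd \<Rightarrow> real"
  assumes bl: "bilinear P"
  shows "Blinfun (P b) = (\<Sum>c\<in>Basis. P b c *\<^sub>R flat c)"
  by (rule blinfun_eqI)
    (simp add: bl linear_functional_basis_expansion[OF bilinear_linear_right[OF bl]] mult.commute)

lemma wedgeJ_apply:
  "blinfun_apply (wedgeJ K u \<phi>) v = blinfun_apply \<phi> (blinfun_apply K v) *\<^sub>R blinfun_apply K u
     - (u \<bullet> blinfun_apply K v) *\<^sub>R blinfun_apply K (sharp \<phi>)"
proof -
  have "linear (\<lambda>v. blinfun_apply \<phi> (blinfun_apply K v) *\<^sub>R blinfun_apply K u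
                  - (u \<bullet> blinfun_apply K v) *\<^sub>R blinfun_apply K (sharp \<phi>))"
    by (rule linearI) (simp_all add: algebra_simps inner_add_right)
  then show ?thesis unfolding wedgeJ_def
    by (simp add: bounded_linear_Blinfun_apply linear_conv_bounded_linear)
qed

lemma bracket_components_zero [simp]:
  "brEV I \<Phi> 0 = 0" "brEVs I \<Phi> 0 = 0"
  "brDD I 0 v = 0" "brDD I u 0 = 0" "brVDs I 0 \<phi> = 0" "brVDs I a 0 = 0"
  "wedgeJ J 0 \<phi> = 0" "wedgeJ J u 0 = 0" "brDDs I 0 \<phi> = 0" "brDDs I u 0 = 0"
  "brVVs I 0 b = 0" "brVVs I a 0 = 0" "brDVs I 0 b = 0" "brDVs I v 0 = 0"
  "brDsDs I 0 \<psi> = 0" "brDsDs I \<phi> 0 = 0"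
  by (simp_all add: brEV_def brEVs_def brDD_def brVDs_def wedgeJ_def brDDs_def brVVs_def
      brDVs_def brDsDs_def split: prod.split)

lemma xiv_nth [simp]: "xiv s $ t = (if t = s then 1 else 0)"
  by (simp add: xiv_def axis_def)


section \<open>The quaternionic structure\<close>

locale quat_structure =
  fixes I :: "qi \<Rightarrow> ('d::euclidean_space \<Rightarrow>\<^sub>L 'd)"
  assumes sq: "\<forall>s. I s o\<^sub>L I s = - id_blinfun"
    and q12: "I Q1 o\<^sub>L I Q2 = I Q3"
    and q21: "I Q2 o\<^sub>L I Q1 = - I Q3"
    and orth: "\<forall>s u v. blinfun_apply (I s) u \<bullet> blinfun_apply (I s) v = u \<bullet> v"
begin

abbreviation J :: "qi \<Rightarrow> 'd \<Rightarrow> 'd" where "J s x \<equiv> blinfun_apply (I s) x"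

lemma J_linear: "linear (J s)"
  using blinfun.bounded_linear_right bounded_linear.linear by blast

lemma J_square [simp]: "J s (J s x) = - x"
  using arg_cong[OF sq[rule_format, of s], of "\<lambda>A. blinfun_apply A x"] by simp

lemma J12 [simp]: "J Q1 (J Q2 x) = J Q3 x"
  using arg_cong[OF q12, of "\<lambda>A. blinfun_apply A x"] by simp

lemma J21 [simp]: "J Q2 (J Q1 x) = - J Q3 x"
  using arg_cong[OF q21, of "\<lambda>A. blinfun_apply A x"] by simp

lemma J13 [simp]: "J Q1 (J Q3 x) = - J Q2 x"
  by (metis J12 J_square)

lemma J31 [simp]: "J Q3 (J Q1 x) = J Q2 x"
  by (metis blinfun.minus_right J12 J21 J_square J13 minus_minus)

lemma J23 [simp]: "J Q2 (J Q3 x) = J Q1 x"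
  by (metis blinfun.minus_right J12 J21 J_square minus_minus)

lemma J32 [simp]: "J Q3 (J Q2 x) = - J Q1 x"
  by (metis J12 J_square blinfun.minus_right)

lemma J_isometry [simp]: "J s u \<bullet> J s v = u \<bullet> v"
  using orth by blast

lemma J_skew: "J s u \<bullet> v = - (u \<bullet> J s v)"
  by (metis J_isometry J_square inner_minus_right minus_minus)

lemma J_skew': "u \<bullet> J s v = - (J s u \<bullet> v)"
  by (simp add: J_skew)

lemma J_perp_self [simp]: "J s u \<bullet> u = 0" "u \<bullet> J s u = 0"
  using J_skew[of s u u] by (auto simp: inner_commute)

lemma J_perp: "s \<noteq> t \<Longrightarrow> J s u \<bullet> J t u = 0"
  by (cases s; cases t) (simp_all add: J_skew)

(* The "quaternionic part" q0 Id + sum q_s I_s of an element of sp(D,g) is zero: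
   skewness kills q0, and commuting with I_1, I_2 kills q_2, q_3, q_1. *)
lemma sp_quaternionic_part_zero:
  assumes sp: "\<Phi>0 \<in> spD I"
    and decomp: "\<And>x. blinfun_apply \<Phi>0 x = - (q0 *\<^sub>R x + (\<Sum>s\<in>UNIV. q s *\<^sub>R J s x))"
  shows "q0 = 0 \<and> q = (\<lambda>_. 0)"
proof -
  have skew: "blinfun_apply \<Phi>0 u \<bullet> v = - (u \<bullet> blinfun_apply \<Phi>0 v)" for u v
    using sp unfolding spD_def by blast
  have commutes: "blinfun_apply \<Phi>0 (J t u) = J t (blinfun_apply \<Phi>0 u)" for t u
    using sp unfolding spD_def by (metis (mono_tags, lifting) blinfun_apply_blinfun_compose mem_Collect_eq)
  obtain e :: 'd where e: "e \<in> Basis" using nonempty_Basis by blast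
  then have unit: "e \<bullet> e = 1" by simp
  note table = decomp sum_qi inner_add_left inner_diff_left inner_diff_right unit J_perp J_perp_self
  have "q0 = 0"
    using skew[of e e] by (simp add: table inner_commute)
  moreover have "q Q2 = 0"
    using arg_cong[OF commutes[of Q1 e], of "\<lambda>w. w \<bullet> J Q3 e"] by (simp add: table J_skew)
  moreover have "q Q3 = 0"
    using arg_cong[OF commutes[of Q1 e], of "\<lambda>w. w \<bullet> J Q2 e"] by (simp add: table J_skew)
  moreover have "q Q1 = 0"
    using arg_cong[OF commutes[of Q2 e], of "\<lambda>w. w \<bullet> J Q3 e"] by (simp add: table J_skew)
  ultimately show ?thesis by (metis (full_types) qi.exhaust)
qed

lemma qdec_zero: "qdec I 0 = (0, \<lambda>_. 0, 0)"
  unfolding qdec_def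
proof (rule the_equality)
  show "case (0, \<lambda>_. 0, 0) of (q0, q, \<Phi>0) \<Rightarrow>
          \<Phi>0 \<in> spD I \<and> 0 = q0 *\<^sub>R id_blinfun + (\<Sum>s\<in>UNIV. q s *\<^sub>R I s) + \<Phi>0"
    by (simp add: spD_def)
next
  fix x :: "real \<times> (qi \<Rightarrow> real) \<times> ('d \<Rightarrow>\<^sub>L 'd)"
  assume "case x of (q0, q, \<Phi>0) \<Rightarrow>
            \<Phi>0 \<in> spD I \<and> 0 = q0 *\<^sub>R id_blinfun + (\<Sum>s\<in>UNIV. q s *\<^sub>R I s) + \<Phi>0"
  then obtain q0 q \<Phi>0 where x: "x = (q0, q, \<Phi>0)" and sp: "\<Phi>0 \<in> spD I"
    and sum0: "0 = q0 *\<^sub>R id_blinfun + (\<Sum>s\<in>UNIV. q s *\<^sub>R I s) + \<Phi>0"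
    by (cases x) auto
  have decomp: "blinfun_apply \<Phi>0 y = - (q0 *\<^sub>R y + (\<Sum>s\<in>UNIV. q s *\<^sub>R J s y))" for y
    using arg_cong[OF sum0, of "\<lambda>A. blinfun_apply A y"]
    by (simp add: add.commute add_eq_0_iff2)
  have "q0 = 0" "q = (\<lambda>_. 0)"
    using sp_quaternionic_part_zero[OF sp decomp] by auto
  moreover have "\<Phi>0 = 0"
    by (rule blinfun_eqI) (simp add: decomp \<open>q0 = 0\<close> \<open>q = (\<lambda>_. 0)\<close>)
  ultimately show "x = (0, \<lambda>_. 0, 0)" using x by simp
qed

lemma bracket_End_zero [simp]: "brEV I 0 a = 0" "brEVs I 0 a = 0"
  by (simp_all add: brEV_def brEVs_def qdec_zero)



section \<open>The Laplacian of a symmetric form: an explicit formula\<close>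

(* For symmetric P and skew I_s the form P(., I_s .) is skew, so its trace vanishes. *)
lemma trace_P_J:
  fixes P :: "'d \<Rightarrow> 'd \<Rightarrow> real"
  assumes bl: "bilinear P" and sy: "\<forall>x y. P x y = P y x"
  shows "(\<Sum>b\<in>Basis. P b (J s b)) = 0"
proof -
  note expand = linear_functional_basis_expansion[OF bilinear_linear_right[OF bl]]
  have "(\<Sum>b\<in>Basis. P b (J s b)) = (\<Sum>b\<in>Basis. \<Sum>c\<in>Basis. (c \<bullet> J s b) * P b c)"
    using expand by simp
  also have "\<dots> = (\<Sum>c\<in>Basis. \<Sum>b\<in>Basis. (c \<bullet> J s b) * P b c)"
    by (rule sum.swap)
  also have "\<dots> = (\<Sum>c\<in>Basis. \<Sum>b\<in>Basis. - ((b \<bullet> J s c) * P c b))"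
  proof -
    have swap: "c \<bullet> J s b = - (b \<bullet> J s c)" for b c
      by (metis J_skew' inner_commute)
    have "(c \<bullet> J s b) * P b c = - ((b \<bullet> J s c) * P c b)" for b c
      using sy swap[of c b] by simp
    then show ?thesis by (intro sum.cong refl)
  qed
  also have "\<dots> = - (\<Sum>b\<in>Basis. P b (J s b))"
    using expand by (simp add: sum_negf)
  finally show ?thesis by simp
qed

(* d* phi_P = - sum_s tr P(., I_s .) eta^s = 0. *)
lemma codifferential_oneform_zero:
  fixes P :: "'d \<Rightarrow> 'd \<Rightarrow> real"
  assumes bl: "bilinear P" and sy: "\<forall>x y. P x y = P y x"
  shows "dstar1 I (oneform P) = 0"
proof -
  have "dstar1 I (oneform P) = (0, 0, 0, 0, \<Sum>b\<in>Basis. brDsDs I (flat b) (Blinfun (P b)))"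
    unfolding dstar1_def using bl
    by (simp add: oneform_def frV_def frD_def cofrV_def cofrD_def br_def alg_components
        flat_def[symmetric] sum_Pair zero_prod_def)
  also have "(\<Sum>b\<in>Basis. brDsDs I (flat b) (Blinfun (P b)))
           = (\<Sum>s\<in>UNIV. (\<Sum>b\<in>Basis. P b (J s b)) *\<^sub>R xiv s)"
    unfolding brDsDs_def using bl
    by (simp add: J_skew'[of _ _ "sharp _"] inner_sharp sharp_inner scaleR_sum_left)
      (rule sum.swap)
  finally show ?thesis
    by (simp add: trace_P_J[OF bl sy] zero_prod_def)
qed

lemma differential_zero [simp]: "d0 I (0, 0, 0, 0, 0) X = 0"
  by (simp add: d0_def br_def alg_components iota_def zero_prod_def)

lemma differential_oneform:
  fixes P :: "'d \<Rightarrow> 'd \<Rightarrow> real"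
  assumes bl: "bilinear P"
  shows "d1 I (oneform P) X Y =
    (0, brVDs I (fst X) (Blinfun (P (snd Y))) - brVDs I (fst Y) (Blinfun (P (snd X))),
        brDDs I (snd X) (Blinfun (P (snd Y))) - brDDs I (snd Y) (Blinfun (P (snd X))), 0, 0)"
  using bl by (simp add: d1_def oneform_def br_def alg_components iota_def projm_def zero_prod_def)

lemma bracket_coframeV: "br I (cofrV s) (0, w, E, 0, 0) = (0, 0, 0, - brDVs I w (xiv s), - brEVs I E (xiv s))"
  by (simp add: br_def alg_components cofrV_def)

lemma bracket_coframeD: "br I (cofrD b) (0, w, E, 0, 0) = (0, 0, - brDDs I w (flat b), flat b o\<^sub>L E, 0)"
  by (simp add: br_def alg_components cofrD_def flat_def[symmetric])

lemma projm_bracket_coframeV: "projm (br I (cofrV s) (iota X)) = (0, 0)"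
  by (simp add: br_def alg_components cofrV_def projm_def iota_def)

lemma projm_bracket_coframeD: "projm (br I (cofrD b) (iota X)) = (0, - brVDs I (fst X) (flat b))"
  by (simp add: br_def alg_components cofrD_def projm_def iota_def flat_def[symmetric])

lemma box_oneform:
  fixes P :: "'d \<Rightarrow> 'd \<Rightarrow> real"
  assumes bl: "bilinear P" and sy: "\<forall>x y. P x y = P y x"
  shows "boxop I (oneform P) X = (0, 0,
     (\<Sum>b\<in>Basis. - brDDs I (- brVDs I (fst X) (Blinfun (P b))) (flat b))
     + (1/2) *\<^sub>R (\<Sum>b\<in>Basis. brDDs I (- brVDs I (fst X) (flat b)) (Blinfun (P b))
                         - brDDs I b (Blinfun (P (- brVDs I (fst X) (flat b))))),
     (\<Sum>s\<in>UNIV. - brDVs I (brVDs I (xiv s) (Blinfun (P (snd X)))) (xiv s))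
     + (\<Sum>b\<in>Basis. flat b o\<^sub>L (brDDs I b (Blinfun (P (snd X))) - brDDs I (snd X) (Blinfun (P b)))),
     0)"
  using bl
  by (simp add: boxop_def codifferential_oneform_zero[OF bl sy] dstar2_def differential_oneform
      frV_def frD_def bracket_coframeV bracket_coframeD projm_bracket_coframeV projm_bracket_coframeD
      sum_Pair zero_prod_def)



section \<open>Contractions of the bracket {u, phi}\<close>

lemma brDDs_apply:
  "blinfun_apply (brDDs I x \<phi>) v =
     blinfun_apply \<phi> x *\<^sub>R v - (\<Sum>s\<in>UNIV. blinfun_apply \<phi> (J s x) *\<^sub>R J s v)
     + (blinfun_apply \<phi> v *\<^sub>R x - (x \<bullet> v) *\<^sub>R sharp \<phi>)
     - (\<Sum>s\<in>UNIV. blinfun_apply \<phi> (J s v) *\<^sub>R J s x - (x \<bullet> J s v) *\<^sub>R J s (sharp \<phi>))"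
  unfolding brDDs_def by (simp add: wedgeJ_apply)

lemma brDDs_linear_left: "linear (\<lambda>x. brDDs I x \<phi>)"
  by (rule linearI; rule blinfun_eqI)
    (simp_all add: brDDs_apply algebra_simps sum.distrib inner_add_left sum_subtractf scaleR_sum_right)

lemma brDDs_linear_right: "linear (\<lambda>\<phi>. brDDs I x \<phi>)"
  by (rule linearI; rule blinfun_eqI)
    (simp_all add: brDDs_apply algebra_simps sum.distrib sum_subtractf scaleR_sum_right)

lemma brDDs_left:
  "brDDs I (x + y) \<phi> = brDDs I x \<phi> + brDDs I y \<phi>"
  "brDDs I (- x) \<phi> = - brDDs I x \<phi>"
  "brDDs I (c *\<^sub>R x) \<phi> = c *\<^sub>R brDDs I x \<phi>"
  "brDDs I (sum f A) \<phi> = (\<Sum>i\<in>A. brDDs I (f i) \<phi>)"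
  using linear_add[OF brDDs_linear_left] linear_neg[OF brDDs_linear_left]
    linear_scale[OF brDDs_linear_left] linear_sum[OF brDDs_linear_left] by auto

lemma brDDs_right:
  "brDDs I x (\<phi> + \<psi>) = brDDs I x \<phi> + brDDs I x \<psi>"
  "brDDs I x (- \<phi>) = - brDDs I x \<phi>"
  "brDDs I x (c *\<^sub>R \<phi>) = c *\<^sub>R brDDs I x \<phi>"
  "brDDs I x (sum f A) = (\<Sum>i\<in>A. brDDs I x (f i))"
  using linear_add[OF brDDs_linear_right] linear_neg[OF brDDs_linear_right]
    linear_scale[OF brDDs_linear_right] linear_sum[OF brDDs_linear_right] by auto

lemma contraction_brDDs:
  "(\<Sum>b\<in>Basis. b \<bullet> blinfun_apply (brDDs I (x b) (\<phi> b)) v) =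
     (\<Sum>b\<in>Basis. blinfun_apply (\<phi> b) (x b) * (b \<bullet> v))
     - (\<Sum>s\<in>UNIV. \<Sum>b\<in>Basis. blinfun_apply (\<phi> b) (J s (x b)) * (b \<bullet> J s v))
     + (\<Sum>b\<in>Basis. blinfun_apply (\<phi> b) v * (b \<bullet> x b))
     - (\<Sum>b\<in>Basis. (x b \<bullet> v) * (b \<bullet> sharp (\<phi> b)))
     - (\<Sum>s\<in>UNIV. (\<Sum>b\<in>Basis. blinfun_apply (\<phi> b) (J s v) * (b \<bullet> J s (x b)))
          - (\<Sum>b\<in>Basis. (x b \<bullet> J s v) * (b \<bullet> J s (sharp (\<phi> b)))))"
proof -
  have "b \<bullet> blinfun_apply (brDDs I y \<psi>) v =
     blinfun_apply \<psi> y * (b \<bullet> v) - (\<Sum>s\<in>UNIV. blinfun_apply \<psi> (J s y) * (b \<bullet> J s v))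
     + blinfun_apply \<psi> v * (b \<bullet> y) - (y \<bullet> v) * (b \<bullet> sharp \<psi>)
     - (\<Sum>s\<in>UNIV. blinfun_apply \<psi> (J s v) * (b \<bullet> J s y) - (y \<bullet> J s v) * (b \<bullet> J s (sharp \<psi>)))"
    for b y \<psi>
    by (simp add: brDDs_apply inner_diff_right inner_add_right inner_sum_right)
  then show ?thesis
    apply (simp add: sum.distrib sum_subtractf)
    apply (subst (1 2) sum.swap)
    by (simp add: sum_subtractf, rule sum.swap)
qed

lemma contraction_vector_slot:
  fixes P :: "'d \<Rightarrow> 'd \<Rightarrow> real"
  assumes bl: "bilinear P"
  shows "(\<Sum>b\<in>Basis. b \<bullet> blinfun_apply (brDDs I b (Blinfun (P u))) v) = (real DIM('d) + 6) * P u v"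
proof -
  have lin: "linear (P u)" using bilinear_linear_right[OF bl] .
  note expand = linear_functional_basis_expansion
  have a1: "(\<Sum>b\<in>Basis. P u b * (b \<bullet> v)) = P u v"
    using expand[OF lin] by (simp add: mult.commute)
  have a2: "(\<Sum>b\<in>Basis. P u (J s b) * (b \<bullet> J s v)) = - P u v" for s
  proof -
    have "linear (\<lambda>b. P u (J s b))"
      using linear_compose[OF J_linear lin] by (simp add: o_def)
    from expand[OF this, of "J s v"] show ?thesis
      using linear_neg[OF lin] by (simp add: mult.commute)
  qed
  have a3: "(\<Sum>b\<in>(Basis::'d set). P u v * (b \<bullet> b)) = real DIM('d) * P u v"
    by (simp add: sum_distrib_left[symmetric])
  have a4: "(\<Sum>b\<in>Basis. (b \<bullet> v) * (b \<bullet> sharp (Blinfun (P u)))) = P u v"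
    using bl by (simp add: inner_sharp expand[OF lin])
  have a5: "(\<Sum>b\<in>Basis. P u (J s v) * (b \<bullet> J s b)) = 0" for s
    by simp
  have a6: "(\<Sum>b\<in>Basis. (b \<bullet> J s v) * (b \<bullet> J s (sharp (Blinfun (P u))))) = P u v" for s
    using bl by (simp add: inner_basis_expansion inner_sharp)
  show ?thesis
    using contraction_brDDs[of "\<lambda>b. b" "\<lambda>_. Blinfun (P u)" v]
    by (simp only: Blinfun_bilinear_apply[OF bl] a1 a2 a3 a4 a5 a6) (simp add: algebra_simps)
qed

lemma contraction_form_slot:
  fixes P :: "'d \<Rightarrow> 'd \<Rightarrow> real"
  assumes bl: "bilinear P" and sy: "\<forall>x y. P x y = P y x"
  shows "(\<Sum>b\<in>Basis. b \<bullet> blinfun_apply (brDDs I u (Blinfun (P b))) v)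
     = 2 * P u v - 2 * (\<Sum>s\<in>UNIV. P (J s u) (J s v)) - (u \<bullet> v) * (\<Sum>b\<in>Basis. P b b)"
proof -
  have expand: "(\<Sum>b\<in>Basis. P b y * (b \<bullet> x)) = P x y" for x y
    using linear_functional_basis_expansion[OF bilinear_linear_left[OF bl]] by (simp add: mult.commute)
  have b1: "(\<Sum>b\<in>Basis. P b u * (b \<bullet> v)) = P u v"
    using expand sy by metis
  have b2: "(\<Sum>b\<in>Basis. P b (J s u) * (b \<bullet> J s v)) = P (J s u) (J s v)" for s
    using expand sy by metis
  have b3: "(\<Sum>b\<in>Basis. P b v * (b \<bullet> u)) = P u v"
    using expand .
  have b4: "(\<Sum>b\<in>Basis. (u \<bullet> v) * (b \<bullet> sharp (Blinfun (P b)))) = (u \<bullet> v) * (\<Sum>b\<in>Basis. P b b)"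
    using bl by (simp add: inner_sharp sum_distrib_left)
  have b5: "(\<Sum>b\<in>Basis. P b (J s v) * (b \<bullet> J s u)) = P (J s u) (J s v)" for s
    using expand .
  have b6: "(\<Sum>b\<in>Basis. (u \<bullet> J s v) * (b \<bullet> J s (sharp (Blinfun (P b))))) = 0" for s
  proof -
    have "(\<Sum>b\<in>Basis. b \<bullet> J s (sharp (Blinfun (P b)))) = - (\<Sum>b\<in>Basis. P b (J s b))"
      using bl by (simp add: J_skew' inner_sharp sum_negf)
    then show ?thesis
      using trace_P_J[OF bl sy, of s] by (simp add: sum_distrib_left[symmetric])
  qed
  show ?thesis
    using contraction_brDDs[of "\<lambda>_. u" "\<lambda>b. Blinfun (P b)" v]
    by (simp only: Blinfun_bilinear_apply[OF bl] b1 b2 b3 b4 b5 b6) (simp add: sum.distrib algebra_simps)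
qed



section \<open>The D*-component\<close>

lemma brDVs_apply: "blinfun_apply (brDVs I w b) v = (\<Sum>s\<in>UNIV. (2 * b $ s) * (J s w \<bullet> v))"
  by (simp add: brDVs_def flat_def[symmetric])

lemma vertical_term:
  "blinfun_apply (\<Sum>s\<in>UNIV. - brDVs I (brVDs I (xiv s) \<phi>) (xiv s)) v = 6 * blinfun_apply \<phi> v"
  by (simp add: brDVs_apply brVDs_def sum_qi inner_sharp sharp_inner J_skew' inner_add_left)

lemma Dstar_component_apply:
  fixes P :: "'d \<Rightarrow> 'd \<Rightarrow> real"
  assumes bl: "bilinear P" and sy: "\<forall>x y. P x y = P y x"
  shows "blinfun_apply ((\<Sum>s\<in>UNIV. - brDVs I (brVDs I (xiv s) (Blinfun (P u))) (xiv s))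
     + (\<Sum>b\<in>Basis. flat b o\<^sub>L (brDDs I b (Blinfun (P u)) - brDDs I u (Blinfun (P b))))) v
   = (real DIM('d) + 10) * P u v + 2 * (\<Sum>s\<in>UNIV. P (J s u) (J s v))
     + (u \<bullet> v) * (\<Sum>b\<in>Basis. P b b)"
proof -
  have "blinfun_apply (\<Sum>b\<in>Basis. flat b o\<^sub>L (brDDs I b (Blinfun (P u)) - brDDs I u (Blinfun (P b)))) v
     = (\<Sum>b\<in>Basis. b \<bullet> blinfun_apply (brDDs I b (Blinfun (P u))) v)
       - (\<Sum>b\<in>Basis. b \<bullet> blinfun_apply (brDDs I u (Blinfun (P b))) v)"
    by (simp add: inner_diff_right sum_subtractf)
  then show ?thesis
    using vertical_term[of "Blinfun (P u)" v]
    by (simp add: contraction_vector_slot[OF bl] contraction_form_slot[OF bl sy] bl algebra_simps)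
qed


section \<open>The End-component cancels\<close>

lemma brDDs_move_form:
  fixes P :: "'d \<Rightarrow> 'd \<Rightarrow> real"
  assumes bl: "bilinear P" and sy: "\<forall>x y. P x y = P y x"
  shows "(\<Sum>b\<in>Basis. brDDs I (J t b) (Blinfun (P b)))
       = (\<Sum>b\<in>Basis. brDDs I (J t (sharp (Blinfun (P b)))) (flat b))"
proof -
  have "(\<Sum>b\<in>Basis. brDDs I (J t b) (Blinfun (P b)))
      = (\<Sum>b\<in>Basis. \<Sum>c\<in>Basis. P b c *\<^sub>R brDDs I (J t b) (flat c))"
    by (simp add: Blinfun_bilinear_expansion[OF bl] brDDs_right)
  also have "\<dots> = (\<Sum>c\<in>Basis. \<Sum>b\<in>Basis. P b c *\<^sub>R brDDs I (J t b) (flat c))"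
    by (rule sum.swap)
  also have "\<dots> = (\<Sum>c\<in>Basis. brDDs I (J t (\<Sum>b\<in>Basis. P c b *\<^sub>R b)) (flat c))"
    using sy by (simp add: brDDs_left)
  also have "\<dots> = (\<Sum>b\<in>Basis. brDDs I (J t (sharp (Blinfun (P b)))) (flat b))"
    using bl by (simp add: sharp_def)
  finally show ?thesis .
qed

lemma brDDs_move_J:
  fixes P :: "'d \<Rightarrow> 'd \<Rightarrow> real"
  assumes bl: "bilinear P"
  shows "(\<Sum>b\<in>Basis. brDDs I b (Blinfun (P (J t b)))) = - (\<Sum>b\<in>Basis. brDDs I (J t b) (Blinfun (P b)))"
proof -
  have expand: "Blinfun (P x) = (\<Sum>d\<in>Basis. (d \<bullet> x) *\<^sub>R Blinfun (P d))" for x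
    using linear_basis_expansion[OF linear_Blinfun_bilinear[OF bl]] by simp
  have transpose: "(\<Sum>b\<in>Basis. (d \<bullet> J t b) *\<^sub>R b) = - J t d" for d
  proof -
    have "(d \<bullet> J t b) *\<^sub>R b = - ((J t d \<bullet> b) *\<^sub>R b)" for b
      by (simp add: J_skew')
    then have "(\<Sum>b\<in>Basis. (d \<bullet> J t b) *\<^sub>R b) = - (\<Sum>b\<in>Basis. (J t d \<bullet> b) *\<^sub>R b)"
      by (simp add: sum_negf)
    then show ?thesis by (simp add: euclidean_representation)
  qed
  have "(\<Sum>b\<in>Basis. brDDs I b (Blinfun (P (J t b))))
      = (\<Sum>b\<in>Basis. \<Sum>d\<in>Basis. (d \<bullet> J t b) *\<^sub>R brDDs I b (Blinfun (P d)))"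
    by (subst expand) (simp add: brDDs_right)
  also have "\<dots> = (\<Sum>d\<in>Basis. \<Sum>b\<in>Basis. (d \<bullet> J t b) *\<^sub>R brDDs I b (Blinfun (P d)))"
    by (rule sum.swap)
  also have "\<dots> = (\<Sum>d\<in>Basis. brDDs I (\<Sum>b\<in>Basis. (d \<bullet> J t b) *\<^sub>R b) (Blinfun (P d)))"
    by (simp add: brDDs_left)
  also have "\<dots> = - (\<Sum>b\<in>Basis. brDDs I (J t b) (Blinfun (P b)))"
    by (simp add: transpose brDDs_left sum_negf)
  finally show ?thesis .
qed

(* With T_t = sum_b {I_t e_b, P(e_b,.)}, the three End-terms of box_oneform equal
   sum_t a_t T_t, - sum_t a_t T_t and sum_t a_t T_t, so they cancel. *)
lemma End_component_vanishes:
  fixes P :: "'d \<Rightarrow> 'd \<Rightarrow> real"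
  assumes bl: "bilinear P" and sy: "\<forall>x y. P x y = P y x"
  shows "(\<Sum>b\<in>Basis. - brDDs I (- brVDs I a (Blinfun (P b))) (flat b))
     + (1/2) *\<^sub>R (\<Sum>b\<in>Basis. brDDs I (- brVDs I a (flat b)) (Blinfun (P b))
                         - brDDs I b (Blinfun (P (- brVDs I a (flat b))))) = 0"
proof -
  define T where "T t = (\<Sum>b\<in>Basis. brDDs I (J t b) (Blinfun (P b)))" for t
  have first: "(\<Sum>b\<in>Basis. - brDDs I (- brVDs I a (Blinfun (P b))) (flat b)) = (\<Sum>t\<in>UNIV. a $ t *\<^sub>R T t)"
  proof -
    have "(\<Sum>b\<in>Basis. - brDDs I (- brVDs I a (Blinfun (P b))) (flat b))
       = (\<Sum>b\<in>Basis. \<Sum>t\<in>UNIV. a $ t *\<^sub>R brDDs I (J t (sharp (Blinfun (P b)))) (flat b))"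
      by (simp add: brVDs_def brDDs_left)
    also have "\<dots> = (\<Sum>t\<in>UNIV. a $ t *\<^sub>R T t)"
      by (subst sum.swap) (simp add: T_def brDDs_move_form[OF bl sy] scaleR_sum_right)
    finally show ?thesis .
  qed
  have second: "(\<Sum>b\<in>Basis. brDDs I (- brVDs I a (flat b)) (Blinfun (P b))) = - (\<Sum>t\<in>UNIV. a $ t *\<^sub>R T t)"
  proof -
    have "(\<Sum>b\<in>Basis. brDDs I (- brVDs I a (flat b)) (Blinfun (P b)))
       = - (\<Sum>b\<in>Basis. \<Sum>t\<in>UNIV. a $ t *\<^sub>R brDDs I (J t b) (Blinfun (P b)))"
      by (simp add: brVDs_def brDDs_left sum_negf)
    also have "\<dots> = - (\<Sum>t\<in>UNIV. a $ t *\<^sub>R T t)"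
      by (subst sum.swap) (simp add: T_def scaleR_sum_right)
    finally show ?thesis .
  qed
  have third: "(\<Sum>b\<in>Basis. brDDs I b (Blinfun (P (- brVDs I a (flat b))))) = (\<Sum>t\<in>UNIV. a $ t *\<^sub>R T t)"
  proof -
    note lin = linear_Blinfun_bilinear[OF bl]
    have "Blinfun (P (- brVDs I a (flat b))) = - (\<Sum>t\<in>UNIV. a $ t *\<^sub>R Blinfun (P (J t b)))" for b
      by (simp add: brVDs_def linear_neg[OF lin] linear_sum[OF lin] linear_scale[OF lin] o_def)
    then have "(\<Sum>b\<in>Basis. brDDs I b (Blinfun (P (- brVDs I a (flat b)))))
       = - (\<Sum>b\<in>Basis. \<Sum>t\<in>UNIV. a $ t *\<^sub>R brDDs I b (Blinfun (P (J t b))))"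
      by (simp add: brDDs_right sum_negf)
    also have "\<dots> = (\<Sum>t\<in>UNIV. a $ t *\<^sub>R T t)"
      by (subst sum.swap)
        (simp add: T_def brDDs_move_J[OF bl] scaleR_sum_right[symmetric] sum_negf)
    finally show ?thesis .
  qed
  have cancel: "S + (1/2) *\<^sub>R (- S - S) = (0::'z::real_vector)" for S
    by (simp add: scaleR_2[symmetric] algebra_simps)
  show ?thesis by (simp only: sum_subtractf first second third cancel)
qed


section \<open>Eigenforms of the Laplacian\<close>

lemma box_oneform_eigen:
  fixes P :: "'d \<Rightarrow> 'd \<Rightarrow> real"
  assumes bl: "bilinear P" and sy: "\<forall>x y. P x y = P y x"
    and eigen: "\<forall>u v. (real DIM('d) + 10) * P u v + 2 * (\<Sum>s\<in>UNIV. P (J s u) (J s v))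
                      + (u \<bullet> v) * (\<Sum>b\<in>Basis. P b b) = c * P u v"
  shows "boxop I (oneform P) = (\<lambda>X. c *\<^sub>R oneform P X)"
proof
  fix X :: "'d tm"
  have "(\<Sum>s\<in>UNIV. - brDVs I (brVDs I (xiv s) (Blinfun (P (snd X)))) (xiv s))
     + (\<Sum>b\<in>Basis. flat b o\<^sub>L (brDDs I b (Blinfun (P (snd X))) - brDDs I (snd X) (Blinfun (P b))))
     = c *\<^sub>R Blinfun (P (snd X))"
    by (rule blinfun_eqI)
      (simp only: Dstar_component_apply[OF bl sy] eigen blinfun.scaleR_left
        Blinfun_bilinear_apply[OF bl] real_scaleR_def)
  then show "boxop I (oneform P) X = c *\<^sub>R oneform P X"
    unfolding box_oneform[OF bl sy] End_component_vanishes[OF bl sy] by (simp add: oneform_def)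
qed

end


(* With dim D = 4n the eigenvalue condition of box_oneform_eigen reads
   (4n+10) P - 2 P = 4(n+2) P,  (4n+10) P + 6 P = 4(n+4) P  and
   (4n+10) g + 6 g + 4n g = 8(n+2) g  in the three cases. *)
theorem lemma4p2:
  fixes n :: nat
    and I :: "qi \<Rightarrow> ('d::euclidean_space \<Rightarrow>\<^sub>L 'd)"
  assumes dim: "DIM('d) = 4 * n"
    and sq: "\<forall>s. I s o\<^sub>L I s = - id_blinfun"
    and q12: "I Q1 o\<^sub>L I Q2 = I Q3"
    and q21: "I Q2 o\<^sub>L I Q1 = - I Q3"
    and orth: "\<forall>s u v. blinfun_apply (I s) u \<bullet> blinfun_apply (I s) v = u \<bullet> v"
  shows
    "(\<forall>P. bilinear P \<and> (\<forall>x y. P x y = P y x) \<and> (\<Sum>b\<in>Basis. P b b) = 0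
          \<and> (\<forall>x y. (\<Sum>s\<in>UNIV. P (blinfun_apply (I s) x) (blinfun_apply (I s) y)) = - P x y)
        \<longrightarrow> boxop I (oneform P) = (\<lambda>X. (4 * (real n + 2)) *\<^sub>R oneform P X))
   \<and> (\<forall>P. bilinear P \<and> (\<forall>x y. P x y = P y x) \<and> (\<Sum>b\<in>Basis. P b b) = 0
          \<and> (\<forall>x y. (\<Sum>s\<in>UNIV. P (blinfun_apply (I s) x) (blinfun_apply (I s) y)) = 3 * P x y)
        \<longrightarrow> boxop I (oneform P) = (\<lambda>X. (4 * (real n + 4)) *\<^sub>R oneform P X))
   \<and> boxop I (oneform (\<lambda>x y. x \<bullet> y)) = (\<lambda>X. (8 * (real n + 2)) *\<^sub>R oneform (\<lambda>x y. x \<bullet> y) X)"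
proof -
  interpret quat_structure I using sq q12 q21 orth by unfold_locales
  have dimr: "real DIM('d) = 4 * real n" using dim by simp
  have "boxop I (oneform P) = (\<lambda>X. (4 * (real n + 2)) *\<^sub>R oneform P X)"
    if "bilinear P" "\<forall>x y. P x y = P y x" "(\<Sum>b\<in>Basis. P b b) = 0"
      "\<forall>x y. (\<Sum>s\<in>UNIV. P (J s x) (J s y)) = - P x y" for P
    by (rule box_oneform_eigen) (use that dimr in \<open>auto simp: algebra_simps\<close>)
  moreover have "boxop I (oneform P) = (\<lambda>X. (4 * (real n + 4)) *\<^sub>R oneform P X)"
    if "bilinear P" "\<forall>x y. P x y = P y x" "(\<Sum>b\<in>Basis. P b b) = 0"
      "\<forall>x y. (\<Sum>s\<in>UNIV. P (J s x) (J s y)) = 3 * P x y" for P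
    by (rule box_oneform_eigen) (use that dimr in \<open>auto simp: algebra_simps\<close>)
  moreover have "boxop I (oneform (\<lambda>x y. x \<bullet> y)) = (\<lambda>X. (8 * (real n + 2)) *\<^sub>R oneform (\<lambda>x y. x \<bullet> y) X)"
  proof (rule box_oneform_eigen)
    show "bilinear (\<lambda>x y :: 'd. x \<bullet> y)"
      by (simp add: bilinear_conv_bounded_bilinear bounded_bilinear_inner)
    show "\<forall>u v :: 'd. (real DIM('d) + 10) * (u \<bullet> v) + 2 * (\<Sum>s\<in>UNIV. J s u \<bullet> J s v)
            + (u \<bullet> v) * (\<Sum>b\<in>(Basis :: 'd set). b \<bullet> b) = 8 * (real n + 2) * (u \<bullet> v)"
      using dimr by (simp add: algebra_simps)
  qed (simp add: inner_commute)
  ultimately show ?thesis by blast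
qed

end
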